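(* Let $M$ be a simply-connected domain in the Minkowski plane $(\mathbb{R}^2(u,v),du\,dv)$ and $\omega,Q,R:M\to\mathbb{R}$ smooth. (1) If $\Phi=(\Phi_1,\Phi_2):M\to\mathrm{SL}_2\mathbb{R}\times\mathrm{SL}_2\mathbb{R}$ satisfies $(\Phi_i)_u=\Phi_i\mathcal U_i$, $(\Phi_i)_v=\Phi_i\mathcal V_i$ ($i=1,2$) with $$\mathcal U_1=\begin{pmatrix}\frac{\omega_u}{4}&e^{\omega/2}\\-e^{-\omega/2}Q&-\frac{\omega_u}{4}\end{pmatrix},\ \mathcal V_1=\begin{pmatrix}-\frac{\omega_v}{4}&e^{-\omega/2}R\\0&\frac{\omega_v}{4}\end{pmatrix},\ \mathcal U_2=\begin{pmatrix}-\frac{\omega_u}{4}&e^{-\omega/2}Q\\0&\frac{\omega_u}{4}\end{pmatrix},\ \mathcal V_2=\begin{pmatrix}\frac{\omega_v}{4}&e^{\omega/2}\\-e^{-\omega/2}R&-\frac{\omega_v}{4}\end{pmatrix},$$ then $\varphi=\Phi_1\Phi_2^t:M\to\mathbb{H}^3_1(-1)$ is a conformal timelike immersion of constant mean curvature $1$. (2) If $\Psi=(\Psi_1,\Psi_2):M\to\mathrm{SL}_2\mathbb{R}\times\mathrm{SL}_2\mathbb{R}$ satisfies $(\Psi_1)_u=\Psi_1\mathcal U_1$, $(\Psi_1)_v=\Psi_1\mathcal V_1$ (as in (1)) and $(\Psi_2)_u=\Psi_2\begin{pmatrix}\frac{\omega_u}{4}&0\\-e^{-\omega/2}Q&-\frac{\omega_u}{4}\end{pmatrix}$,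 $(\Psi_2)_v=\Psi_2\begin{pmatrix}-\frac{\omega_v}{4}&e^{-\omega/2}R\\-e^{\omega/2}&\frac{\omega_v}{4}\end{pmatrix}$, then $\psi=\Psi_1\Psi_2^{-1}:M\to\mathbb{H}^3_1(-1)$ is a conformal timelike immersion of constant mean curvature $1$.
   Context: $\mathbb{E}^4_2$ (metric $-(dx_0)^2-(dx_1)^2+(dx_2)^2+(dx_3)^2$) is identified with $M_2(\mathbb{R})$ via $(x_0,x_1,x_2,x_3)\mapsto \begin{pmatrix}x_0+x_3& x_1+x_2\\ -x_1+x_2 & x_0-x_3\end{pmatrix}$, with $\langle u,v\rangle=\tfrac12\{\operatorname{tr}(uv)-\operatorname{tr}u\operatorname{tr}v\}$; then $\mathbb{H}^3_1(-1)=\{\langle x,x\rangle=-1\}=\mathrm{SL}_2\mathbb{R}$. Conformal timelike with null coordinates $(u,v)$: $\langle\varphi_u,\varphi_u\rangle=\langle\varphi_v,\varphi_v\rangle=0$, $\langle\varphi_u,\varphi_v\rangle=\tfrac12e^\omega$. Mean curvature with respect to the unit normal $N=\Phi_1\mathbf k'\Phi_2^t$ (resp. $\Psi_1\mathbf k'\Psi_2^{-1}$), $\mathbf k'=\mathrm{diag}(1,-1)$, is $H=2e^{-\omega}\langle\varphi_{uv},N\rangle$. *)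

theory Defs
  imports "HOL-Analysis.Analysis"
begin

type_synonym mat2 = "real^2^2"

definition mat2 :: "real \<Rightarrow> real \<Rightarrow> real \<Rightarrow> real \<Rightarrow> mat2" where
  "mat2 a b c d = (\<chi> i j. if i = 1 then (if j = 1 then a else b) else (if j = 1 then c else d))"

text \<open>The neutral inner product on M_2(R) identified with E^4_2.\<close>
definition ip :: "mat2 \<Rightarrow> mat2 \<Rightarrow> real" where
  "ip x y = (trace (x ** y) - trace x * trace y) / 2"

definition SL2R :: "mat2 set" where "SL2R = {A. det A = 1}"

definition H31 :: "mat2 set" where "H31 = {x. ip x x = -1}"

definition kprime :: mat2 where "kprime = mat2 1 0 0 (-1)"

definition pd_u :: "(real \<times> real \<Rightarrow> 'a::real_normed_vector) \<Rightarrow> real \<times> real \<Rightarrow> 'a" where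
  "pd_u f p = vector_derivative (\<lambda>t. f (t, snd p)) (at (fst p))"

definition pd_v :: "(real \<times> real \<Rightarrow> 'a::real_normed_vector) \<Rightarrow> real \<times> real \<Rightarrow> 'a" where
  "pd_v f p = vector_derivative (\<lambda>t. f (fst p, t)) (at (snd p))"

definition has_pd_v :: "(real \<times> real \<Rightarrow> 'a::real_normed_vector) \<Rightarrow> 'a \<Rightarrow> real \<times> real \<Rightarrow> bool" where
  "has_pd_v f D p \<longleftrightarrow> ((\<lambda>t. f (fst p, t)) has_vector_derivative D) (at (snd p))"

fun iter_pd :: "bool list \<Rightarrow> (real \<times> real \<Rightarrow> real) \<Rightarrow> real \<times> real \<Rightarrow> real" where
  "iter_pd [] f = f"
| "iter_pd (b # bs) f = (if b then pd_u else pd_v) (iter_pd bs f)"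

definition smooth_on :: "(real \<times> real) set \<Rightarrow> (real \<times> real \<Rightarrow> real) \<Rightarrow> bool" where
  "smooth_on M f \<longleftrightarrow> (\<forall>bs. iter_pd bs f differentiable_on M)"

definition frame_eq :: "(real \<times> real) set \<Rightarrow> (real \<times> real \<Rightarrow> mat2) \<Rightarrow> (real \<times> real \<Rightarrow> mat2)
    \<Rightarrow> (real \<times> real \<Rightarrow> mat2) \<Rightarrow> bool" where
  "frame_eq M F U V \<longleftrightarrow> (\<forall>p\<in>M.
     (F has_derivative (\<lambda>h. fst h *\<^sub>R (F p ** U p) + snd h *\<^sub>R (F p ** V p))) (at p))"

definition U1 :: "(real \<times> real \<Rightarrow> real) \<Rightarrow> (real \<times> real \<Rightarrow> real) \<Rightarrow> real \<times> real \<Rightarrow> mat2" where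
  "U1 \<omega> Q p = mat2 (pd_u \<omega> p / 4) (exp (\<omega> p / 2)) (- exp (- \<omega> p / 2) * Q p) (- pd_u \<omega> p / 4)"
definition V1 :: "(real \<times> real \<Rightarrow> real) \<Rightarrow> (real \<times> real \<Rightarrow> real) \<Rightarrow> real \<times> real \<Rightarrow> mat2" where
  "V1 \<omega> R p = mat2 (- pd_v \<omega> p / 4) (exp (- \<omega> p / 2) * R p) 0 (pd_v \<omega> p / 4)"
definition U2 :: "(real \<times> real \<Rightarrow> real) \<Rightarrow> (real \<times> real \<Rightarrow> real) \<Rightarrow> real \<times> real \<Rightarrow> mat2" where
  "U2 \<omega> Q p = mat2 (- pd_u \<omega> p / 4) (exp (- \<omega> p / 2) * Q p) 0 (pd_u \<omega> p / 4)"
definition V2 :: "(real \<times> real \<Rightarrow> real) \<Rightarrow> (real \<times> real \<Rightarrow> real) \<Rightarrow> real \<times> real \<Rightarrow> mat2" where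
  "V2 \<omega> R p = mat2 (pd_v \<omega> p / 4) (exp (\<omega> p / 2)) (- exp (- \<omega> p / 2) * R p) (- pd_v \<omega> p / 4)"
definition U2' :: "(real \<times> real \<Rightarrow> real) \<Rightarrow> (real \<times> real \<Rightarrow> real) \<Rightarrow> real \<times> real \<Rightarrow> mat2" where
  "U2' \<omega> Q p = mat2 (pd_u \<omega> p / 4) 0 (- exp (- \<omega> p / 2) * Q p) (- pd_u \<omega> p / 4)"
definition V2' :: "(real \<times> real \<Rightarrow> real) \<Rightarrow> (real \<times> real \<Rightarrow> real) \<Rightarrow> real \<times> real \<Rightarrow> mat2" where
  "V2' \<omega> R p = mat2 (- pd_v \<omega> p / 4) (exp (- \<omega> p / 2) * R p) (- exp (\<omega> p / 2)) (pd_v \<omega> p / 4)"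

text \<open>phi : M -> H^3_1(-1) is a conformal timelike immersion with null coordinates (u,v),
  conformal factor e^omega, unit normal N, and constant mean curvature
  H = 2 e^(-omega) <phi_uv, N> = 1.\<close>
definition cmc1_conformal_timelike ::
  "(real \<times> real) set \<Rightarrow> (real \<times> real \<Rightarrow> mat2) \<Rightarrow> (real \<times> real \<Rightarrow> real) \<Rightarrow> (real \<times> real \<Rightarrow> mat2) \<Rightarrow> bool" where
  "cmc1_conformal_timelike M \<phi> \<omega> N \<longleftrightarrow> (\<forall>p\<in>M.
      \<phi> p \<in> H31 \<and>
      \<phi> differentiable (at p) \<and> inj (frechet_derivative \<phi> (at p)) \<and>
      ip (pd_u \<phi> p) (pd_u \<phi> p) = 0 \<and> ip (pd_v \<phi> p) (pd_v \<phi> p) = 0 \<and>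
      ip (pd_u \<phi> p) (pd_v \<phi> p) = exp (\<omega> p) / 2 \<and>
      ip (N p) (N p) = 1 \<and> ip (N p) (\<phi> p) = 0 \<and>
      ip (N p) (pd_u \<phi> p) = 0 \<and> ip (N p) (pd_v \<phi> p) = 0 \<and>
      (\<exists>D. has_pd_v (pd_u \<phi>) D p) \<and>
      2 * exp (- \<omega> p) * ip (pd_v (pd_u \<phi>) p) (N p) = 1)"

end

theory Submission
  imports Defs
begin

text \<open>Both immersions have the form \<open>\<phi> = F1 F2\<close> with \<open>F1' = F1 A\<close> and \<open>F2' = C F2\<close>:
  for \<open>F2 = \<Phi>2\<^sup>t\<close> the frame equations are transposed, for \<open>F2 = \<Psi>2\<^sup>-\<^sup>1\<close> they are
  adjugated. The neutral inner product is the polarised negative determinant, so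
  \<open>X \<mapsto> F1 X F2\<close> is an isometry of \<open>E\<^sup>4\<^sub>2\<close> when \<open>F1, F2 \<in> SL\<^sub>2R\<close>. As
  \<open>A + C = e\<^bsup>\<omega>/2\<^esup> E12\<close> and \<open>B + D = e\<^bsup>\<omega>/2\<^esup> E21\<close>, the derivatives \<open>\<phi>\<^sub>u, \<phi>\<^sub>v\<close> and
  the normal \<open>N\<close> are the images of the null vectors \<open>e\<^bsup>\<omega>/2\<^esup> E12, e\<^bsup>\<omega>/2\<^esup> E21\<close> and of
  \<open>k'\<close>, so all first-order conditions are checked at the identity. Finally
  \<open>\<phi>\<^sub>u\<^sub>v = F1 (B E + (\<omega>\<^sub>v/2) E + E D) F2\<close> with \<open>E = e\<^bsup>\<omega>/2\<^esup> E12\<close>; pairing with \<open>k'\<close>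
  sees only the diagonal of the middle factor, which gives \<open>e\<^sup>\<omega>/2\<close> exactly because the
  lower left entry of \<open>B\<close> vanishes.\<close>

lemma bounded_bilinear_matrix_matrix_mult:
  "bounded_bilinear ((**) :: real^'n^'m \<Rightarrow> real^'p^'n \<Rightarrow> real^'p^'m)"
  unfolding bilinear_conv_bounded_bilinear[symmetric] bilinear_def
  by (auto intro!: linearI simp: matrix_add_ldistrib matrix_scalar_ac scalar_matrix_assoc[symmetric])
    (simp add: matrix_matrix_mult_def vec_eq_iff sum.distrib distrib_right)

lemma bounded_linear_transpose: "bounded_linear (transpose :: real^'n^'m \<Rightarrow> real^'m^'n)"
  unfolding linear_conv_bounded_linear[symmetric]
  by (auto intro!: linearI simp: transpose_def vec_eq_iff)

lemma mat2_nth [simp]: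
  "mat2 a b c d $ 1 $ 1 = a" "mat2 a b c d $ 1 $ 2 = b"
  "mat2 a b c d $ 2 $ 1 = c" "mat2 a b c d $ 2 $ 2 = d"
  by (simp_all add: mat2_def)

lemma mat2_eq_iff:
  "(A::mat2) = B \<longleftrightarrow> A$1$1 = B$1$1 \<and> A$1$2 = B$1$2 \<and> A$2$1 = B$2$1 \<and> A$2$2 = B$2$2"
  by (auto simp: vec_eq_iff forall_2)

lemma matrix_matrix_mult_nth_2: "((A::mat2) ** B) $ i $ j = A$i$1 * B$1$j + A$i$2 * B$2$j"
  by (simp add: matrix_matrix_mult_def sum_2)

lemma trace_2: "trace (A::mat2) = A$1$1 + A$2$2"
  by (simp add: trace_def sum_2)

lemma transpose_nth: "transpose A $ i $ j = A $ j $ i"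
  by (simp add: transpose_def)

lemmas mat2_entrywise = mat2_eq_iff matrix_matrix_mult_nth_2 trace_2 det_2 transpose_nth

lemma ip_commute: "ip X Y = ip Y X"
  by (simp add: ip_def mat2_entrywise algebra_simps)

lemma ip_scaleR_add_left: "ip (c *\<^sub>R X + d *\<^sub>R Y) Z = c * ip X Z + d * ip Y Z"
  by (simp add: ip_def mat2_entrywise field_simps)

lemma ip_self: "ip X X = - det X"
  by (simp add: ip_def mat2_entrywise field_simps)

lemma ip_polarization: "ip X Y = (det X + det Y - det (X + Y)) / 2"
  by (simp add: ip_def mat2_entrywise algebra_simps)

lemma ip_mult_mult:
  "ip (A ** X ** B) (A ** Y ** B) = det A * det B * ip X Y"
proof -
  have "A ** X ** B + A ** Y ** B = A ** (X + Y) ** B"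
    by (simp add: mat2_entrywise algebra_simps)
  then show ?thesis
    by (simp add: ip_polarization det_mul algebra_simps add_divide_distrib diff_divide_distrib)
qed

lemma inj_null_frame:
  assumes "ip X X = 0" "ip Y Y = 0" "ip X Y \<noteq> 0"
  shows "inj (\<lambda>h. fst h *\<^sub>R X + snd h *\<^sub>R Y)"
proof (rule injI)
  fix h k :: "real \<times> real"
  assume "fst h *\<^sub>R X + snd h *\<^sub>R Y = fst k *\<^sub>R X + snd k *\<^sub>R Y"
  then have "ip (fst h *\<^sub>R X + snd h *\<^sub>R Y) Z = ip (fst k *\<^sub>R X + snd k *\<^sub>R Y) Z" for Z
    by simp
  from this[of X] this[of Y] have "snd h = snd k" "fst h = fst k"
    using assms by (simp_all add: ip_scaleR_add_left ip_commute[of Y X])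
  then show "h = k" by (simp add: prod_eq_iff)
qed

lemma has_derivative_partials:
  assumes "(f has_derivative (\<lambda>h. fst h *\<^sub>R X + snd h *\<^sub>R Y)) (at p)"
  shows "((\<lambda>t. f (t, snd p)) has_vector_derivative X) (at (fst p))"
    and "((\<lambda>t. f (fst p, t)) has_vector_derivative Y) (at (snd p))"
proof -
  have f: "(f has_derivative (\<lambda>h. fst h *\<^sub>R X + snd h *\<^sub>R Y)) (at (fst p, snd p))"
    using assms by simp
  have "((\<lambda>t. (t, snd p)) has_derivative (\<lambda>h. (h, 0))) (at (fst p))"
    by (auto intro!: derivative_eq_intros)
  from has_derivative_compose[OF this f]
  show "((\<lambda>t. f (t, snd p)) has_vector_derivative X) (at (fst p))"
    by (simp add: has_vector_derivative_def)
  have "((\<lambda>t. (fst p, t)) has_derivative (\<lambda>h. (0, h))) (at (snd p))"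
    by (auto intro!: derivative_eq_intros)
  from has_derivative_compose[OF this f]
  show "((\<lambda>t. f (fst p, t)) has_vector_derivative Y) (at (snd p))"
    by (simp add: has_vector_derivative_def)
qed

lemma pd_eq_of_has_derivative:
  assumes "(f has_derivative (\<lambda>h. fst h *\<^sub>R X + snd h *\<^sub>R Y)) (at p)"
  shows "pd_u f p = X" and "pd_v f p = Y"
  using has_derivative_partials[OF assms]
  by (simp_all add: pd_u_def pd_v_def vector_derivative_at)

lemma has_vector_derivative_pd_v:
  assumes "f differentiable (at p)"
  shows "((\<lambda>t. f (fst p, t)) has_vector_derivative pd_v f p) (at (snd p))"
proof -
  have "((\<lambda>t. (fst p, t)) differentiable (at (snd p)))"
    by (auto intro!: derivative_eq_intros simp: differentiable_def)
  from differentiable_chain_at[OF this] have "(\<lambda>t. f (fst p, t)) differentiable (at (snd p))"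
    using assms by (simp add: o_def)
  then show ?thesis
    unfolding pd_v_def by (simp add: vector_derivative_works)
qed

lemma has_derivative_transpose_frame:
  fixes F :: "real \<times> real \<Rightarrow> real^'n^'n"
  assumes "(F has_derivative (\<lambda>h. fst h *\<^sub>R (F p ** U) + snd h *\<^sub>R (F p ** V))) (at p)"
  shows "((\<lambda>q. transpose (F q)) has_derivative
      (\<lambda>h. fst h *\<^sub>R (transpose U ** transpose (F p)) + snd h *\<^sub>R (transpose V ** transpose (F p)))) (at p)"
  using bounded_linear.has_derivative[OF bounded_linear_transpose assms]
  by (simp add: linear_add[OF bounded_linear.linear[OF bounded_linear_transpose]]
      transpose_scalar matrix_transpose_mul)

lemma matrix_inv_unique:
  fixes A :: "'a::semiring_1^'n^'n"
  assumes "A ** B = mat 1" and "B ** A = mat 1"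
  shows "matrix_inv A = B"
proof -
  have "A ** matrix_inv A = mat 1" "matrix_inv A ** A = mat 1"
    using someI_ex[of "\<lambda>B. A ** B = mat 1 \<and> B ** A = mat 1"] assms
    unfolding matrix_inv_def by blast+
  then have "matrix_inv A = matrix_inv A ** (A ** B)"
    using assms by simp
  also have "\<dots> = B"
    by (simp add: matrix_mul_assoc \<open>matrix_inv A ** A = mat 1\<close>)
  finally show ?thesis .
qed

definition adj2 :: "mat2 \<Rightarrow> mat2" where
  "adj2 A = mat2 (A$2$2) (- A$1$2) (- A$2$1) (A$1$1)"

lemma adj2_mult: "adj2 (A ** B) = adj2 B ** adj2 A"
  by (simp add: adj2_def mat2_entrywise algebra_simps)

lemma bounded_linear_adj2: "bounded_linear adj2"
  unfolding linear_conv_bounded_linear[symmetric]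
  by (auto intro!: linearI simp: adj2_def mat2_entrywise)

lemma matrix_inv_eq_adj2:
  assumes "det (A::mat2) \<noteq> 0"
  shows "matrix_inv A = (1 / det A) *\<^sub>R adj2 A"
proof (rule matrix_inv_unique)
  have "A ** adj2 A = det A *\<^sub>R mat 1" and "adj2 A ** A = det A *\<^sub>R mat 1"
    by (simp_all add: adj2_def mat2_entrywise mat_def algebra_simps)
  then show "A ** ((1 / det A) *\<^sub>R adj2 A) = mat 1" and "(1 / det A) *\<^sub>R adj2 A ** A = mat 1"
    using assms by (simp_all add: matrix_scalar_ac scalar_matrix_assoc[symmetric])
qed

lemma has_derivative_inverse_frame:
  assumes "open M" and "p \<in> M" and det: "\<And>q. q \<in> M \<Longrightarrow> det (F q) = 1"
    and "(F has_derivative (\<lambda>h. fst h *\<^sub>R (F p ** U) + snd h *\<^sub>R (F p ** V))) (at p)"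
  shows "((\<lambda>q. matrix_inv (F q)) has_derivative
      (\<lambda>h. fst h *\<^sub>R (adj2 U ** matrix_inv (F p)) + snd h *\<^sub>R (adj2 V ** matrix_inv (F p)))) (at p)"
proof -
  have inv: "matrix_inv (F q) = adj2 (F q)" if "q \<in> M" for q
    using det[OF that] by (simp add: matrix_inv_eq_adj2)
  have "((\<lambda>q. adj2 (F q)) has_derivative
      (\<lambda>h. fst h *\<^sub>R (adj2 U ** adj2 (F p)) + snd h *\<^sub>R (adj2 V ** adj2 (F p)))) (at p)"
    using bounded_linear.has_derivative[OF bounded_linear_adj2 assms(4)]
    by (simp add: linear_add[OF bounded_linear.linear[OF bounded_linear_adj2]]
        linear_scale[OF bounded_linear.linear[OF bounded_linear_adj2]] adj2_mult)
  then show ?thesis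
    using inv \<open>p \<in> M\<close> by (auto intro: has_derivative_transform_within_open[OF _ \<open>open M\<close> \<open>p \<in> M\<close>])
qed

definition E12 :: mat2 where "E12 = mat2 0 1 0 0"
definition E21 :: mat2 where "E21 = mat2 0 0 1 0"

locale cmc1_frame_pair =
  fixes M :: "(real \<times> real) set" and \<omega> :: "real \<times> real \<Rightarrow> real"
    and F1 F2 A B C D :: "real \<times> real \<Rightarrow> mat2"
  assumes open_M: "open M"
    and differentiable_\<omega>: "\<omega> differentiable_on M"
    and det_F1: "p \<in> M \<Longrightarrow> det (F1 p) = 1"
    and det_F2: "p \<in> M \<Longrightarrow> det (F2 p) = 1"
    and F1_deriv: "p \<in> M \<Longrightarrow>
      (F1 has_derivative (\<lambda>h. fst h *\<^sub>R (F1 p ** A p) + snd h *\<^sub>R (F1 p ** B p))) (at p)"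
    and F2_deriv: "p \<in> M \<Longrightarrow>
      (F2 has_derivative (\<lambda>h. fst h *\<^sub>R (C p ** F2 p) + snd h *\<^sub>R (D p ** F2 p))) (at p)"
    and A_plus_C: "p \<in> M \<Longrightarrow> A p + C p = exp (\<omega> p / 2) *\<^sub>R E12"
    and B_plus_D: "p \<in> M \<Longrightarrow> B p + D p = exp (\<omega> p / 2) *\<^sub>R E21"
    and B_lower_left: "p \<in> M \<Longrightarrow> B p $ 2 $ 1 = 0"
begin

abbreviation \<phi> :: "real \<times> real \<Rightarrow> mat2" where "\<phi> \<equiv> \<lambda>q. F1 q ** F2 q"
abbreviation N :: "real \<times> real \<Rightarrow> mat2" where "N \<equiv> \<lambda>q. F1 q ** kprime ** F2 q"

lemma ip_sandwich: "p \<in> M \<Longrightarrow> ip (F1 p ** X ** F2 p) (F1 p ** Y ** F2 p) = ip X Y"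
  by (simp add: ip_mult_mult det_F1 det_F2)

lemma phi_has_derivative:
  assumes "p \<in> M"
  shows "(\<phi> has_derivative (\<lambda>h. fst h *\<^sub>R (F1 p ** (exp (\<omega> p / 2) *\<^sub>R E12) ** F2 p)
                            + snd h *\<^sub>R (F1 p ** (exp (\<omega> p / 2) *\<^sub>R E21) ** F2 p))) (at p)"
proof -
  have "F1 p ** (s *\<^sub>R (C p ** F2 p) + t *\<^sub>R (D p ** F2 p)) + (s *\<^sub>R (F1 p ** A p) + t *\<^sub>R (F1 p ** B p)) ** F2 p
      = s *\<^sub>R (F1 p ** (A p + C p) ** F2 p) + t *\<^sub>R (F1 p ** (B p + D p) ** F2 p)" for s t
    by (simp add: mat2_entrywise algebra_simps)
  with bounded_bilinear.FDERIV[OF bounded_bilinear_matrix_matrix_mult F1_deriv[OF assms] F2_deriv[OF assms]]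
  show ?thesis
    by (simp add: A_plus_C[OF assms] B_plus_D[OF assms])
qed

lemma pd_u_phi: "p \<in> M \<Longrightarrow> pd_u \<phi> p = F1 p ** (exp (\<omega> p / 2) *\<^sub>R E12) ** F2 p"
  and pd_v_phi: "p \<in> M \<Longrightarrow> pd_v \<phi> p = F1 p ** (exp (\<omega> p / 2) *\<^sub>R E21) ** F2 p"
  using pd_eq_of_has_derivative[OF phi_has_derivative] by blast+

lemma phi_in_H31: "p \<in> M \<Longrightarrow> \<phi> p \<in> H31"
  by (simp add: H31_def ip_self det_mul det_F1 det_F2)

lemma phi_differentiable: "p \<in> M \<Longrightarrow> \<phi> differentiable (at p)"
  unfolding differentiable_def using phi_has_derivative by blast

lemma ip_pd_phi:
  assumes "p \<in> M"
  shows "ip (pd_u \<phi> p) (pd_u \<phi> p) = 0" and "ip (pd_v \<phi> p) (pd_v \<phi> p) = 0"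
    and "ip (pd_u \<phi> p) (pd_v \<phi> p) = exp (\<omega> p) / 2"
  unfolding pd_u_phi[OF assms] pd_v_phi[OF assms] ip_sandwich[OF assms]
  by (simp_all add: ip_def mat2_entrywise E12_def E21_def flip: exp_add)

lemma inj_phi_derivative:
  assumes "p \<in> M"
  shows "inj (frechet_derivative \<phi> (at p))"
proof -
  have "frechet_derivative \<phi> (at p) = (\<lambda>h. fst h *\<^sub>R pd_u \<phi> p + snd h *\<^sub>R pd_v \<phi> p)"
    using frechet_derivative_at[OF phi_has_derivative[OF assms]] assms
    by (simp add: pd_u_phi pd_v_phi)
  then show ?thesis
    using assms by (simp add: inj_null_frame ip_pd_phi)
qed

lemma N_unit_normal:
  assumes "p \<in> M"
  shows "ip (N p) (N p) = 1" and "ip (N p) (\<phi> p) = 0"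
    and "ip (N p) (pd_u \<phi> p) = 0" and "ip (N p) (pd_v \<phi> p) = 0"
proof -
  have "ip (N p) (\<phi> p) = ip (F1 p ** kprime ** F2 p) (F1 p ** mat 1 ** F2 p)"
    by simp
  also have "\<dots> = 0"
    unfolding ip_sandwich[OF assms] by (simp add: ip_def mat2_entrywise kprime_def mat_def)
  finally show "ip (N p) (\<phi> p) = 0" .
qed (unfold pd_u_phi[OF assms] pd_v_phi[OF assms] ip_sandwich[OF assms],
     simp_all add: ip_def mat2_entrywise kprime_def E12_def E21_def)

lemma has_pd_v_pd_u_phi:
  assumes p: "p \<in> M"
  defines "E \<equiv> exp (\<omega> p / 2) *\<^sub>R E12"
  shows "has_pd_v (pd_u \<phi>) (F1 p ** (B p ** E + (pd_v \<omega> p / 2) *\<^sub>R E + E ** D p) ** F2 p) p"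
proof -
  have \<omega>_v: "((\<lambda>t. \<omega> (fst p, t)) has_real_derivative pd_v \<omega> p) (at (snd p))"
    using differentiable_\<omega> open_M p
    by (auto simp: has_real_derivative_iff_has_vector_derivative differentiable_on_eq_differentiable_at
        intro: has_vector_derivative_pd_v)
  have E_v: "((\<lambda>t. exp (\<omega> (fst p, t) / 2) *\<^sub>R E12) has_vector_derivative (pd_v \<omega> p / 2) *\<^sub>R E)
      (at (snd p))"
    unfolding E_def using \<omega>_v by (auto intro!: derivative_eq_intros)
  have F1_v: "((\<lambda>t. F1 (fst p, t)) has_vector_derivative F1 p ** B p) (at (snd p))"
    using has_derivative_partials(2)[OF F1_deriv[OF p]] .
  have F2_v: "((\<lambda>t. F2 (fst p, t)) has_vector_derivative D p ** F2 p) (at (snd p))"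
    using has_derivative_partials(2)[OF F2_deriv[OF p]] .
  have "((\<lambda>t. F1 (fst p, t) ** (exp (\<omega> (fst p, t) / 2) *\<^sub>R E12) ** F2 (fst p, t))
      has_vector_derivative F1 p ** (B p ** E + (pd_v \<omega> p / 2) *\<^sub>R E + E ** D p) ** F2 p) (at (snd p))"
    using bounded_bilinear.has_vector_derivative[OF bounded_bilinear_matrix_matrix_mult
        bounded_bilinear.has_vector_derivative[OF bounded_bilinear_matrix_matrix_mult F1_v E_v] F2_v]
    by (rule has_vector_derivative_eq_rhs) (simp add: E_def mat2_entrywise algebra_simps)
  moreover have "open ((\<lambda>t. (fst p, t)) -` M)"
    by (rule continuous_open_vimage[OF open_M]) (intro continuous_intros)
  ultimately have "((\<lambda>t. pd_u \<phi> (fst p, t))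
      has_vector_derivative F1 p ** (B p ** E + (pd_v \<omega> p / 2) *\<^sub>R E + E ** D p) ** F2 p) (at (snd p))"
    by (rule has_vector_derivative_transform_within_open) (use p pd_u_phi in auto)
  then show ?thesis
    by (simp add: has_pd_v_def)
qed

lemma mean_curvature_phi:
  assumes p: "p \<in> M"
  shows "2 * exp (- \<omega> p) * ip (pd_v (pd_u \<phi>) p) (N p) = 1"
proof -
  define E where "E = exp (\<omega> p / 2) *\<^sub>R E12"
  define K where "K = B p ** E + (pd_v \<omega> p / 2) *\<^sub>R E + E ** D p"
  have "pd_v (pd_u \<phi>) p = F1 p ** K ** F2 p"
    using has_pd_v_pd_u_phi[OF p] by (simp add: has_pd_v_def pd_v_def vector_derivative_at E_def K_def)
  then have "ip (pd_v (pd_u \<phi>) p) (N p) = ip K kprime"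
    by (simp add: ip_sandwich[OF p])
  also have "\<dots> = exp (\<omega> p) / 2"
  proof -
    have "D p = exp (\<omega> p / 2) *\<^sub>R E21 - B p"
      using B_plus_D[OF p] by (simp add: algebra_simps)
    then show ?thesis
      using B_lower_left[OF p]
      by (simp add: K_def E_def E12_def E21_def kprime_def ip_def mat2_entrywise field_simps
          flip: exp_add)
  qed
  finally show ?thesis
    by (simp add: exp_minus field_simps)
qed

lemma cmc1_conformal_timelike_product: "cmc1_conformal_timelike M \<phi> \<omega> N"
  unfolding cmc1_conformal_timelike_def
  using phi_in_H31 phi_differentiable inj_phi_derivative ip_pd_phi N_unit_normal
    has_pd_v_pd_u_phi mean_curvature_phi
  by blast

end

lemma cmc1_transpose_frames:
  assumes "open M" and "\<omega> differentiable_on M"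
    and SL: "\<forall>p\<in>M. \<Phi>1 p \<in> SL2R \<and> \<Phi>2 p \<in> SL2R"
    and "frame_eq M \<Phi>1 (U1 \<omega> Q) (V1 \<omega> R)" and frame2: "frame_eq M \<Phi>2 (U2 \<omega> Q) (V2 \<omega> R)"
  shows "cmc1_conformal_timelike M (\<lambda>p. \<Phi>1 p ** transpose (\<Phi>2 p)) \<omega>
           (\<lambda>p. \<Phi>1 p ** kprime ** transpose (\<Phi>2 p))"
proof -
  interpret cmc1_frame_pair M \<omega> \<Phi>1 "\<lambda>p. transpose (\<Phi>2 p)" "U1 \<omega> Q" "V1 \<omega> R"
    "\<lambda>p. transpose (U2 \<omega> Q p)" "\<lambda>p. transpose (V2 \<omega> R p)"
  proof
    show "p \<in> M \<Longrightarrow> ((\<lambda>p. transpose (\<Phi>2 p)) has_derivative (\<lambda>h. fst h *\<^sub>R (transpose (U2 \<omega> Q p)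
        ** transpose (\<Phi>2 p)) + snd h *\<^sub>R (transpose (V2 \<omega> R p) ** transpose (\<Phi>2 p)))) (at p)" for p
      using frame2 by (simp add: frame_eq_def has_derivative_transpose_frame)
    show "p \<in> M \<Longrightarrow> det (transpose (\<Phi>2 p)) = 1" for p
      using SL by (simp add: SL2R_def)
  qed (use assms in \<open>auto simp: SL2R_def frame_eq_def mat2_entrywise U1_def V1_def U2_def V2_def
        E12_def E21_def\<close>)
  show ?thesis
    by (rule cmc1_conformal_timelike_product)
qed

lemma cmc1_inverse_frames:
  assumes "open M" and "\<omega> differentiable_on M"
    and SL: "\<forall>p\<in>M. \<Psi>1 p \<in> SL2R \<and> \<Psi>2 p \<in> SL2R"
    and "frame_eq M \<Psi>1 (U1 \<omega> Q) (V1 \<omega> R)" and "frame_eq M \<Psi>2 (U2' \<omega> Q) (V2' \<omega> R)"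
  shows "cmc1_conformal_timelike M (\<lambda>p. \<Psi>1 p ** matrix_inv (\<Psi>2 p)) \<omega>
           (\<lambda>p. \<Psi>1 p ** kprime ** matrix_inv (\<Psi>2 p))"
proof -
  interpret cmc1_frame_pair M \<omega> \<Psi>1 "\<lambda>p. matrix_inv (\<Psi>2 p)" "U1 \<omega> Q" "V1 \<omega> R"
    "\<lambda>p. adj2 (U2' \<omega> Q p)" "\<lambda>p. adj2 (V2' \<omega> R p)"
  proof
    show "p \<in> M \<Longrightarrow> ((\<lambda>p. matrix_inv (\<Psi>2 p)) has_derivative (\<lambda>h. fst h *\<^sub>R (adj2 (U2' \<omega> Q p)
        ** matrix_inv (\<Psi>2 p)) + snd h *\<^sub>R (adj2 (V2' \<omega> R p) ** matrix_inv (\<Psi>2 p)))) (at p)" for p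
      using assms by (simp add: frame_eq_def SL2R_def has_derivative_inverse_frame)
    show "p \<in> M \<Longrightarrow> det (matrix_inv (\<Psi>2 p)) = 1" for p
      using SL by (simp add: SL2R_def matrix_inv_eq_adj2 adj2_def det_2 algebra_simps)
  qed (use assms in \<open>auto simp: SL2R_def frame_eq_def mat2_entrywise adj2_def U1_def V1_def
        U2'_def V2'_def E12_def E21_def\<close>)
  show ?thesis
    by (rule cmc1_conformal_timelike_product)
qed

text \<open>Connectedness, simple connectivity and the smoothness of \<open>Q\<close> and \<open>R\<close> only matter for
  the existence of the frames; of the smoothness of \<open>\<omega>\<close> only differentiability is used.\<close>

theorem corollary5p2:
  fixes M :: "(real \<times> real) set"
    and \<omega> Q R :: "real \<times> real \<Rightarrow> real"
    and \<Phi>1 \<Phi>2 \<Psi>1 \<Psi>2 :: "real \<times> real \<Rightarrow> mat2"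
  assumes "open M" and "connected M" and "simply_connected M"
    and "smooth_on M \<omega>" and "smooth_on M Q" and "smooth_on M R"
  shows "((\<forall>p\<in>M. \<Phi>1 p \<in> SL2R \<and> \<Phi>2 p \<in> SL2R)
          \<and> frame_eq M \<Phi>1 (U1 \<omega> Q) (V1 \<omega> R) \<and> frame_eq M \<Phi>2 (U2 \<omega> Q) (V2 \<omega> R)
          \<longrightarrow> cmc1_conformal_timelike M (\<lambda>p. \<Phi>1 p ** transpose (\<Phi>2 p)) \<omega>
                (\<lambda>p. \<Phi>1 p ** kprime ** transpose (\<Phi>2 p)))
       \<and> ((\<forall>p\<in>M. \<Psi>1 p \<in> SL2R \<and> \<Psi>2 p \<in> SL2R)
          \<and> frame_eq M \<Psi>1 (U1 \<omega> Q) (V1 \<omega> R) \<and> frame_eq M \<Psi>2 (U2' \<omega> Q) (V2' \<omega> R)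
          \<longrightarrow> cmc1_conformal_timelike M (\<lambda>p. \<Psi>1 p ** matrix_inv (\<Psi>2 p)) \<omega>
                (\<lambda>p. \<Psi>1 p ** kprime ** matrix_inv (\<Psi>2 p)))"
proof -
  have "\<omega> differentiable_on M"
    using \<open>smooth_on M \<omega>\<close> by (metis smooth_on_def iter_pd.simps(1))
  then show ?thesis
    using \<open>open M\<close> cmc1_transpose_frames cmc1_inverse_frames by blast
qed

end
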